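(* Let $\Gamma\colon\Delta(\mathcal{Y})\to2^{\mathcal{V}}$ be a property that is both identified by $\nu$ and elicited by a scoring function $s$ with convex superprediction set. Let $\gamma\in\mathcal{V}$ with $\Gamma^{-1}(\gamma)\ne\emptyset$. Then $\mathcal{H}_{s_\gamma}=\mathcal{H}_{\nu_\gamma}$, where $\mathcal{H}_{s_\gamma}=\operatorname{cl}\{g\in C(\mathcal{Y}):g\le\beta(s_\gamma-s_c)\text{ for some }\beta\ge0,c\in\mathcal{V}\}$ and $\mathcal{H}_{\nu_\gamma}=\operatorname{cl}\{g\in C(\mathcal{Y}):g\le\alpha\nu_\gamma\text{ for some }\alpha\in\mathbb{R}\}$, closures in the $\sigma(C(\mathcal{Y}),\mathrm{ca}(\mathcal{Y}))$-topology.
   Context: $\mathcal{Y}$ compact metrizable; $C(\mathcal{Y})$ continuous real functions with pointwise order; $\mathrm{ca}(\mathcal{Y})$ finite signed Borel measures, $\langle\phi,f\rangle=\int f\,d\phi$; $\Delta(\mathcal{Y})$ Borel probability measures, $\mathbb{E}_\phi[f]=\langle\phi,f\rangle$; $\sigma(C(\mathcal{Y}),\mathrm{ca}(\mathcal{Y}))$ is the coarsest topology on $C(\mathcal{Y})$ making all $f\mapsto\langle\phi,f\rangle$ continuous. Level set: $\Gamma^{-1}(\gamma)=\{\phi\in\Delta(\mathcal{Y}):\gamma\in\Gamma(\phi)\}$. $s$ (with $s_\gamma:=s(\cdot,\gamma)\in C(\mathcal{Y})$) \emph{elicits} $\Gamma$ if $\Gamma(\phi)=\operatorname{argmin}_{c\in\mathcal{V}}\mathbb{E}_\phi[s_c]$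 for all $\phi$; $\nu$ (with $\nu_\gamma:=\nu(\cdot,\gamma)\in C(\mathcal{Y})$) \emph{identifies} $\Gamma$ if $\mathbb{E}_\phi[\nu_\gamma]=0\iff\gamma\in\Gamma(\phi)$. Superprediction set: $\operatorname{spr}(s)=\{g\in C(\mathcal{Y}):\exists c\in\mathcal{V},\ s_c\le g\}$. *)

theory Defs
  imports "HOL-Probability.Probability"
begin

definition Cfun :: "('y::topological_space \<Rightarrow> real) set" where
  "Cfun = {f. continuous_on UNIV f}"

text \<open>A finite signed Borel measure phi in ca(Y)
  is represented (Jordan decomposition) as a pair (M1, M2) of finite Borel measures,
  with pairing <phi, f> = integral f dM1 - integral f dM2.\<close>
definition fin_borel :: "'y::topological_space measure \<Rightarrow> bool" where
  "fin_borel M \<longleftrightarrow> sets M = sets borel \<and> finite_measure M"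

definition pairing :: "'y::topological_space measure \<times> 'y measure \<Rightarrow> ('y \<Rightarrow> real) \<Rightarrow> real" where
  "pairing \<phi> f = integral\<^sup>L (fst \<phi>) f - integral\<^sup>L (snd \<phi>) f"

definition ca :: "('y::topological_space measure \<times> 'y measure) set" where
  "ca = {\<phi>. fin_borel (fst \<phi>) \<and> fin_borel (snd \<phi>)}"

definition Prob :: "'y::topological_space measure set" where
  "Prob = {M. sets M = sets borel \<and> prob_space M}"

definition expect :: "'y::topological_space measure \<Rightarrow> ('y \<Rightarrow> real) \<Rightarrow> real" where
  "expect M f = integral\<^sup>L M f"

definition weak_top :: "('y::topological_space \<Rightarrow> real) topology" where
  "weak_top = topology_generated_by
     {{f \<in> Cfun. pairing \<phi> f \<in> U} | \<phi> U. \<phi> \<in> ca \<and> open U}"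

definition elicits :: "('y::topological_space \<Rightarrow> 'v \<Rightarrow> real) \<Rightarrow> 'v set \<Rightarrow> ('y measure \<Rightarrow> 'v set) \<Rightarrow> bool" where
  "elicits s V \<Gamma> \<longleftrightarrow> (\<forall>c\<in>V. (\<lambda>y. s y c) \<in> Cfun) \<and>
     (\<forall>\<phi>\<in>Prob. \<Gamma> \<phi> = {c \<in> V. \<forall>c'\<in>V. expect \<phi> (\<lambda>y. s y c) \<le> expect \<phi> (\<lambda>y. s y c')})"

definition identifies :: "('y::topological_space \<Rightarrow> 'v \<Rightarrow> real) \<Rightarrow> 'v set \<Rightarrow> ('y measure \<Rightarrow> 'v set) \<Rightarrow> bool" where
  "identifies \<nu> V \<Gamma> \<longleftrightarrow> (\<forall>c\<in>V. (\<lambda>y. \<nu> y c) \<in> Cfun) \<and>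
     (\<forall>\<phi>\<in>Prob. \<forall>\<gamma>\<in>V. expect \<phi> (\<lambda>y. \<nu> y \<gamma>) = 0 \<longleftrightarrow> \<gamma> \<in> \<Gamma> \<phi>)"

definition level_set :: "('y::topological_space measure \<Rightarrow> 'v set) \<Rightarrow> 'v \<Rightarrow> 'y measure set" where
  "level_set \<Gamma> \<gamma> = {\<phi> \<in> Prob. \<gamma> \<in> \<Gamma> \<phi>}"

definition spr :: "('y::topological_space \<Rightarrow> 'v \<Rightarrow> real) \<Rightarrow> 'v set \<Rightarrow> ('y \<Rightarrow> real) set" where
  "spr s V = {g \<in> Cfun. \<exists>c\<in>V. \<forall>y. s y c \<le> g y}"

definition convex_fset :: "('y \<Rightarrow> real) set \<Rightarrow> bool" where
  "convex_fset A \<longleftrightarrow> (\<forall>g\<in>A. \<forall>h\<in>A. \<forall>t::real. 0 \<le> t \<and> t \<le> 1 \<longrightarrow>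
      (\<lambda>y. t * g y + (1 - t) * h y) \<in> A)"

definition H_s :: "('y::topological_space \<Rightarrow> 'v \<Rightarrow> real) \<Rightarrow> 'v set \<Rightarrow> 'v \<Rightarrow> ('y \<Rightarrow> real) set" where
  "H_s s V \<gamma> = weak_top closure_of
     {g \<in> Cfun. \<exists>\<beta>\<ge>0. \<exists>c\<in>V. \<forall>y. g y \<le> \<beta> * (s y \<gamma> - s y c)}"

definition H_nu :: "('y::topological_space \<Rightarrow> 'v \<Rightarrow> real) \<Rightarrow> 'v \<Rightarrow> ('y \<Rightarrow> real) set" where
  "H_nu \<nu> \<gamma> = weak_top closure_of {g \<in> Cfun. \<exists>\<alpha>::real. \<forall>y. g y \<le> \<alpha> * \<nu> y \<gamma>}"

end

theory Submission
  imports Defs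
begin

text \<open>
  The weak closure of a convex cone \<open>K \<subseteq> C(Y)\<close> containing all nonpositive functions is its
  bipolar: by finite-dimensional Hahn--Banach separation a point \<open>g\<close> outside the closure is
  separated from \<open>K\<close> by a finite signed combination of measures, which is a positive functional
  because \<open>K\<close> contains the negative cone, hence (by closed regularity of finite Borel measures)
  a positive measure, and after normalisation a probability \<open>P\<close> with \<open>E\<^sub>P g > 0\<close> and
  \<open>E\<^sub>P \<le> 0\<close> on \<open>K\<close>.  Both sets in the theorem are closures of such cones (for the scores this
  needs convexity of the superprediction set), and a probability is nonpositive on either cone
  exactly when \<open>\<gamma>\<close> is a property value for it, by elicitation resp. identification.  So the two
  cones have the same polar and hence the same closure.
\<close>

section \<open>Continuous functions, expectations and the weak topology\<close>

lemma Cfun_const: "(\<lambda>_. c) \<in> Cfun"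
  by (simp add: Cfun_def)

lemma Cfun_add: "f \<in> Cfun \<Longrightarrow> g \<in> Cfun \<Longrightarrow> (\<lambda>x. f x + g x) \<in> Cfun"
  by (simp add: Cfun_def continuous_on_add)

lemma Cfun_diff: "f \<in> Cfun \<Longrightarrow> g \<in> Cfun \<Longrightarrow> (\<lambda>x. f x - g x) \<in> Cfun"
  by (simp add: Cfun_def continuous_on_diff)

lemma Cfun_scale: "f \<in> Cfun \<Longrightarrow> (\<lambda>x. c * f x) \<in> Cfun"
  by (simp add: Cfun_def continuous_on_mult_left)

lemma Cfun_borel_measurable: "f \<in> Cfun \<Longrightarrow> f \<in> borel_measurable borel"
  unfolding Cfun_def by (auto intro: borel_measurable_continuous_onI)

lemma Cfun_bounded:
  fixes f :: "'a::metric_space \<Rightarrow> real"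
  assumes "compact (UNIV :: 'a set)" "f \<in> Cfun"
  shows "\<exists>B. \<forall>x. \<bar>f x\<bar> \<le> B"
proof -
  have "bounded (range f)"
    using assms unfolding Cfun_def by (intro compact_imp_bounded compact_continuous_image) auto
  then show ?thesis unfolding bounded_real by auto
qed

lemma fin_borel_measurable:
  "fin_borel M \<Longrightarrow> f \<in> borel_measurable borel \<Longrightarrow> f \<in> borel_measurable M"
  unfolding fin_borel_def by (simp cong: measurable_cong_sets)

lemma fin_borel_integrable:
  fixes f :: "'a::topological_space \<Rightarrow> real"
  assumes "fin_borel M" "f \<in> borel_measurable borel" "\<And>x. \<bar>f x\<bar> \<le> B"
  shows "integrable M f"
  using assms fin_borel_measurable[OF assms(1,2)] unfolding fin_borel_def
  by (intro finite_measure.integrable_const_bound[where B=B]) auto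

lemma fin_borel_integrable_Cfun:
  fixes f :: "'a::metric_space \<Rightarrow> real"
  assumes "compact (UNIV :: 'a set)" "fin_borel M" "f \<in> Cfun"
  shows "integrable M f"
  using assms Cfun_bounded[OF assms(1,3)] by (metis fin_borel_integrable Cfun_borel_measurable)

lemma Prob_fin_borel: "P \<in> Prob \<Longrightarrow> fin_borel P"
  by (auto simp: Prob_def fin_borel_def prob_space_def)

lemma pairing_add:
  fixes f g :: "'a::metric_space \<Rightarrow> real"
  assumes "compact (UNIV :: 'a set)" "\<phi> \<in> ca" "f \<in> Cfun" "g \<in> Cfun"
  shows "pairing \<phi> (\<lambda>x. f x + g x) = pairing \<phi> f + pairing \<phi> g"
  using assms by (simp add: pairing_def ca_def fin_borel_integrable_Cfun)

lemma pairing_scale: "pairing \<phi> (\<lambda>x. c * f x) = c * pairing \<phi> f"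
  unfolding pairing_def by (simp add: right_diff_distrib)

lemma expect_mono:
  fixes f g :: "'a::metric_space \<Rightarrow> real"
  assumes "compact (UNIV :: 'a set)" "P \<in> Prob" "f \<in> Cfun" "g \<in> Cfun" "\<And>x. f x \<le> g x"
  shows "expect P f \<le> expect P g"
  using assms Prob_fin_borel unfolding expect_def
  by (intro integral_mono fin_borel_integrable_Cfun) auto

lemma expect_diff:
  fixes f g :: "'a::metric_space \<Rightarrow> real"
  assumes "compact (UNIV :: 'a set)" "P \<in> Prob" "f \<in> Cfun" "g \<in> Cfun"
  shows "expect P (\<lambda>x. f x - g x) = expect P f - expect P g"
  using assms Prob_fin_borel[OF assms(2)] by (simp add: expect_def fin_borel_integrable_Cfun)

lemma expect_eq_pairing: "expect P f = pairing (P, null_measure borel) f"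
  by (simp add: expect_def pairing_def)

lemma Prob_in_ca: "P \<in> Prob \<Longrightarrow> (P, null_measure borel) \<in> ca"
  using Prob_fin_borel[of P] by (auto simp: ca_def fin_borel_def intro!: finite_measureI)

lemma topspace_weak_top: "topspace weak_top = Cfun"
proof -
  have "(null_measure borel, null_measure borel) \<in> ca"
    by (auto simp: ca_def fin_borel_def intro!: finite_measureI)
  then show ?thesis
    unfolding weak_top_def topology_generated_by_topspace by blast
qed

lemma openin_weak_top_pairing:
  "\<phi> \<in> ca \<Longrightarrow> open U \<Longrightarrow> openin weak_top {f \<in> Cfun. pairing \<phi> f \<in> U}"
  unfolding weak_top_def by (rule topology_generated_by_Basis) blast

lemma closedin_weak_top_expect_le:
  assumes "P \<in> Prob"
  shows "closedin weak_top {f \<in> Cfun. expect P f \<le> c}"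
proof -
  have "{f \<in> Cfun. expect P f \<le> c} = topspace weak_top - {f \<in> Cfun. pairing (P, null_measure borel) f \<in> {c<..}}"
    by (auto simp: topspace_weak_top expect_eq_pairing)
  then show ?thesis
    using openin_weak_top_pairing[OF Prob_in_ca[OF assms], of "{c<..}"] by (simp add: closedin_diff)
qed

lemma openin_weak_top_nhd:
  assumes "openin weak_top W" "g \<in> W"
  shows "\<exists>\<Phi> \<epsilon>. finite \<Phi> \<and> \<Phi> \<subseteq> ca \<and> \<epsilon> > 0 \<and>
           {f \<in> Cfun. \<forall>\<phi>\<in>\<Phi>. \<bar>pairing \<phi> f - pairing \<phi> g\<bar> < \<epsilon>} \<subseteq> W"
proof -
  have "generate_topology_on {{f \<in> Cfun. pairing \<phi> f \<in> U} | \<phi> U. \<phi> \<in> ca \<and> open U} W"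
    using assms(1) unfolding weak_top_def openin_topology_generated_by_iff .
  then show ?thesis using assms(2)
  proof (induction arbitrary: g)
    case Empty
    then show ?case by simp
  next
    case (Int a b)
    obtain \<Phi>1 \<epsilon>1 where 1: "finite \<Phi>1" "\<Phi>1 \<subseteq> ca" "\<epsilon>1 > 0"
      "{f \<in> Cfun. \<forall>\<phi>\<in>\<Phi>1. \<bar>pairing \<phi> f - pairing \<phi> g\<bar> < \<epsilon>1} \<subseteq> a"
      using Int.IH(1)[OF IntD1[OF Int.prems]] by blast
    obtain \<Phi>2 \<epsilon>2 where 2: "finite \<Phi>2" "\<Phi>2 \<subseteq> ca" "\<epsilon>2 > 0"
      "{f \<in> Cfun. \<forall>\<phi>\<in>\<Phi>2. \<bar>pairing \<phi> f - pairing \<phi> g\<bar> < \<epsilon>2} \<subseteq> b"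
      using Int.IH(2)[OF IntD2[OF Int.prems]] by blast
    have "{f \<in> Cfun. \<forall>\<phi>\<in>\<Phi>1 \<union> \<Phi>2. \<bar>pairing \<phi> f - pairing \<phi> g\<bar> < min \<epsilon>1 \<epsilon>2} \<subseteq> a \<inter> b"
      using 1(4) 2(4) by fastforce
    then show ?case
      using 1 2 by (intro exI[of _ "\<Phi>1 \<union> \<Phi>2"] exI[of _ "min \<epsilon>1 \<epsilon>2"]) auto
  next
    case (UN K)
    then obtain k where "k \<in> K" "g \<in> k" by blast
    with UN.IH[of k g] show ?case by blast
  next
    case (Basis S)
    then obtain \<phi> U where S: "S = {f \<in> Cfun. pairing \<phi> f \<in> U}" "\<phi> \<in> ca" "open U"
      by auto
    moreover have "pairing \<phi> g \<in> U"
      using Basis.prems S(1) by blast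
    ultimately obtain \<epsilon> where "\<epsilon> > 0" "ball (pairing \<phi> g) \<epsilon> \<subseteq> U"
      using open_contains_ball by blast
    then show ?case
      using S by (intro exI[of _ "{\<phi>}"] exI[of _ \<epsilon>]) (auto simp: dist_real_def subset_iff)
  qed
qed

section \<open>Separating a point from a convex cone in finitely many coordinates\<close>

text \<open>Hahn--Banach one coordinate at a time: the functional \<open>(t, x) \<mapsto> t b + \<Sum>\<^sub>i\<^sub><\<^sub>k a\<^sub>i x\<^sub>i\<close>,
  dominated by \<open>q (t p + x)\<close> for \<open>x\<close> supported on \<open>{..<k}\<close>, extends to \<open>x\<close> supported on \<open>{..k}\<close>.\<close>

lemma sublinear_extension_constant:
  fixes q :: "(nat \<Rightarrow> real) \<Rightarrow> real"
  assumes sub: "\<And>u v. q (\<lambda>i. u i + v i) \<le> q u + q v"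
    and dom: "\<And>t x. \<forall>i\<ge>k. x i = 0 \<Longrightarrow> t * b + (\<Sum>i<k. a i * x i) \<le> q (\<lambda>i. t * p i + x i)"
  shows "\<exists>c. \<forall>t x. (\<forall>i\<ge>k. x i = 0) \<longrightarrow>
           t * b + (\<Sum>i<k. a i * x i) - q (\<lambda>i. t * p i + x i - (if i = k then 1 else 0)) \<le> c \<and>
           c \<le> q (\<lambda>i. t * p i + x i + (if i = k then 1 else 0)) - (t * b + (\<Sum>i<k. a i * x i))"
proof -
  define L where "L t x = t * b + (\<Sum>i<k. a i * x i)" for t x
  define e where "e = (\<lambda>i::nat. if i = k then (1::real) else 0)"
  define S where "S = {(t::real, x::nat \<Rightarrow> real). \<forall>i\<ge>k. x i = 0}"
  \<comment> \<open>Every lower bound lies below every upper bound, so their supremum lies in between.\<close>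
  have gap: "L t x - q (\<lambda>i. t * p i + x i - e i) \<le> q (\<lambda>i. t' * p i + x' i + e i) - L t' x'"
    if "(t, x) \<in> S" "(t', x') \<in> S" for t x t' x'
  proof -
    have "L (t + t') (\<lambda>i. x i + x' i) \<le> q (\<lambda>i. (t + t') * p i + (x i + x' i))"
      using that dom by (auto simp: S_def L_def)
    also have "(\<lambda>i. (t + t') * p i + (x i + x' i))
               = (\<lambda>i. (t * p i + x i - e i) + (t' * p i + x' i + e i))"
      by (auto simp: algebra_simps)
    also have "q \<dots> \<le> q (\<lambda>i. t * p i + x i - e i) + q (\<lambda>i. t' * p i + x' i + e i)"
      by (rule sub)
    finally show ?thesis
      by (simp add: L_def algebra_simps sum.distrib)
  qed
  define c where "c = Sup ((\<lambda>(t, x). L t x - q (\<lambda>i. t * p i + x i - e i)) ` S)"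
  have S0: "(0, \<lambda>_. 0) \<in> S" by (auto simp: S_def)
  have "L t x - q (\<lambda>i. t * p i + x i - e i) \<le> c" if "(t, x) \<in> S" for t x
    unfolding c_def using that gap[OF _ S0]
    by (intro cSup_upper bdd_aboveI) (auto intro!: image_eqI[where x="(t, x)"])
  moreover have "c \<le> q (\<lambda>i. t * p i + x i + e i) - L t x" if "(t, x) \<in> S" for t x
    unfolding c_def using S0 gap[OF _ that] by (intro cSup_least) auto
  ultimately show ?thesis unfolding S_def L_def e_def by blast
qed

lemma sublinear_extension_step:
  fixes q :: "(nat \<Rightarrow> real) \<Rightarrow> real"
  assumes sub: "\<And>u v. q (\<lambda>i. u i + v i) \<le> q u + q v"
    and hom: "\<And>t u. t > 0 \<Longrightarrow> q (\<lambda>i. t * u i) = t * q u"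
    and dom: "\<And>t x. \<forall>i\<ge>k. x i = 0 \<Longrightarrow> t * b + (\<Sum>i<k. a i * x i) \<le> q (\<lambda>i. t * p i + x i)"
  shows "\<exists>c. \<forall>t x. (\<forall>i\<ge>Suc k. x i = 0) \<longrightarrow>
           t * b + (\<Sum>i<Suc k. (a(k := c)) i * x i) \<le> q (\<lambda>i. t * p i + x i)"
proof -
  define L where "L t x = t * b + (\<Sum>i<k. a i * x i)" for t x
  define e where "e = (\<lambda>i::nat. if i = k then (1::real) else 0)"
  obtain c where
    lower: "\<And>t x. \<forall>i\<ge>k. x i = 0 \<Longrightarrow> L t x - q (\<lambda>i. t * p i + x i - e i) \<le> c" and
    upper: "\<And>t x. \<forall>i\<ge>k. x i = 0 \<Longrightarrow> c \<le> q (\<lambda>i. t * p i + x i + e i) - L t x"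
    using sublinear_extension_constant[where q=q, OF sub dom] unfolding L_def e_def by blast
  show ?thesis
  proof (intro exI allI impI)
    fix t and y :: "nat \<Rightarrow> real"
    assume y: "\<forall>i\<ge>Suc k. y i = 0"
    define s where "s = y k"
    define x where "x = y(k := 0)"
    have x: "\<forall>i\<ge>k. x i = 0" "\<forall>i\<ge>k. x i / r = 0" for r using y by (auto simp: x_def)
    have lhs: "t * b + (\<Sum>i<Suc k. (a(k := c)) i * y i) = L t x + c * s"
      by (simp add: L_def s_def x_def)
    have rhs: "(\<lambda>i. t * p i + y i) = (\<lambda>i. t * p i + x i + s * e i)"
      by (auto simp: x_def s_def e_def)
    \<comment> \<open>Scale the bound at \<open>(t, x) / |s|\<close> back by \<open>|s|\<close>, using positive homogeneity.\<close>
    have "L t x + c * s \<le> q (\<lambda>i. t * p i + x i + s * e i)"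
    proof (cases s "0::real" rule: linorder_cases)
      case equal
      then show ?thesis using dom[OF x(1)] by (simp add: L_def)
    next
      case greater
      have "s * c \<le> s * (q (\<lambda>i. t / s * p i + x i / s + e i) - L (t / s) (\<lambda>i. x i / s))"
        using upper[where t="t / s" and x="\<lambda>i. x i / s", OF x(2)] greater by (intro mult_left_mono) auto
      also have "\<dots> = q (\<lambda>i. s * (t / s * p i + x i / s + e i)) - s * L (t / s) (\<lambda>i. x i / s)"
        using hom[OF greater, of "\<lambda>i. t / s * p i + x i / s + e i"] by (simp add: right_diff_distrib)
      also have "(\<lambda>i. s * (t / s * p i + x i / s + e i)) = (\<lambda>i. t * p i + x i + s * e i)"
        using greater by (auto simp: field_simps)
      also have "s * L (t / s) (\<lambda>i. x i / s) = L t x"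
        using greater by (simp add: L_def sum_distrib_left field_simps)
      finally show ?thesis by (simp add: algebra_simps)
    next
      case less
      define r where "r = - s"
      have r: "r > 0" using less by (simp add: r_def)
      have "r * (L (t / r) (\<lambda>i. x i / r) - q (\<lambda>i. t / r * p i + x i / r - e i)) \<le> r * c"
        using lower[where t="t / r" and x="\<lambda>i. x i / r", OF x(2)] r by (intro mult_left_mono) auto
      also have "r * (L (t / r) (\<lambda>i. x i / r) - q (\<lambda>i. t / r * p i + x i / r - e i))
                 = r * L (t / r) (\<lambda>i. x i / r) - q (\<lambda>i. r * (t / r * p i + x i / r - e i))"
        using hom[OF r, of "\<lambda>i. t / r * p i + x i / r - e i"] by (simp add: right_diff_distrib)
      also have "(\<lambda>i. r * (t / r * p i + x i / r - e i)) = (\<lambda>i. t * p i + x i + s * e i)"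
        using r by (auto simp: field_simps r_def)
      also have "r * L (t / r) (\<lambda>i. x i / r) = L t x"
        using r by (simp add: L_def sum_distrib_left field_simps)
      finally show ?thesis by (simp add: r_def algebra_simps)
    qed
    then show "t * b + (\<Sum>i<Suc k. (a(k := c)) i * y i) \<le> q (\<lambda>i. t * p i + y i)"
      unfolding lhs rhs .
  qed
qed

lemma sublinear_dominates_linear:
  fixes q :: "(nat \<Rightarrow> real) \<Rightarrow> real"
  assumes sub: "\<And>u v. q (\<lambda>i. u i + v i) \<le> q u + q v"
    and hom: "\<And>t u. t > 0 \<Longrightarrow> q (\<lambda>i. t * u i) = t * q u"
    and nonneg: "\<And>u. q u \<ge> 0"
  shows "\<exists>a. \<forall>t x. (\<forall>i\<ge>n. x i = 0) \<longrightarrow> t * q p + (\<Sum>i<n. a i * x i) \<le> q (\<lambda>i. t * p i + x i)"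
proof (induction n)
  case 0
  have "t * q p \<le> q (\<lambda>i. t * p i)" for t
  proof (cases "t > 0")
    case False
    then have "t * q p \<le> 0" using nonneg[of p] by (simp add: mult_nonpos_nonneg)
    then show ?thesis using nonneg[of "\<lambda>i. t * p i"] by linarith
  qed (simp add: hom)
  then show ?case by auto
next
  case (Suc n)
  then show ?case using sublinear_extension_step[where q=q, OF sub hom] by blast
qed

definition cone_dist :: "(nat \<Rightarrow> real) set \<Rightarrow> nat \<Rightarrow> (nat \<Rightarrow> real) \<Rightarrow> real" where
  "cone_dist C n x = (INF c\<in>C. \<Sum>i<n. \<bar>x i - c i\<bar>)"

context
  fixes C :: "(nat \<Rightarrow> real) set"
  assumes C0: "(\<lambda>_. 0) \<in> C"
    and C_add: "\<And>u v. u \<in> C \<Longrightarrow> v \<in> C \<Longrightarrow> (\<lambda>i. u i + v i) \<in> C"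
    and C_scale: "\<And>u t. u \<in> C \<Longrightarrow> t > 0 \<Longrightarrow> (\<lambda>i. t * u i) \<in> C"
begin

lemma cone_dist_nonneg: "cone_dist C n x \<ge> 0"
  unfolding cone_dist_def using C0 by (intro cINF_greatest) (auto intro: sum_nonneg)

lemma cone_dist_le: "c \<in> C \<Longrightarrow> cone_dist C n x \<le> (\<Sum>i<n. \<bar>x i - c i\<bar>)"
  unfolding cone_dist_def by (intro cINF_lower bdd_belowI[where m=0]) (auto intro: sum_nonneg)

lemma cone_dist_subadditive: "cone_dist C n (\<lambda>i. u i + v i) \<le> cone_dist C n u + cone_dist C n v"
proof -
  let ?q = "cone_dist C n"
  have "?q (\<lambda>i. u i + v i) \<le> (\<Sum>i<n. \<bar>u i - c1 i\<bar>) + (\<Sum>i<n. \<bar>v i - c2 i\<bar>)"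
    if "c1 \<in> C" "c2 \<in> C" for c1 c2
  proof -
    have "?q (\<lambda>i. u i + v i) \<le> (\<Sum>i<n. \<bar>(u i + v i) - (c1 i + c2 i)\<bar>)"
      using cone_dist_le[OF C_add[OF that]] by simp
    also have "\<dots> \<le> (\<Sum>i<n. \<bar>u i - c1 i\<bar> + \<bar>v i - c2 i\<bar>)"
      by (intro sum_mono) linarith
    finally show ?thesis by (simp add: sum.distrib)
  qed
  then have "?q (\<lambda>i. u i + v i) - (\<Sum>i<n. \<bar>v i - c2 i\<bar>) \<le> ?q u" if "c2 \<in> C" for c2
    unfolding cone_dist_def[of C n u] using C0 that by (intro cINF_greatest) (auto simp: algebra_simps)
  then have "?q (\<lambda>i. u i + v i) - ?q u \<le> ?q v"
    unfolding cone_dist_def[of C n v] using C0 by (intro cINF_greatest) (auto simp: algebra_simps)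
  then show ?thesis by simp
qed

lemma cone_dist_scale_le:
  assumes t: "t > 0"
  shows "cone_dist C n (\<lambda>i. t * u i) \<le> t * cone_dist C n u"
proof -
  let ?q = "cone_dist C n"
  have "?q (\<lambda>i. t * u i) / t \<le> ?q u"
    unfolding cone_dist_def[of C n u] using C0
  proof (intro cINF_greatest)
    fix c assume c: "c \<in> C"
    have "?q (\<lambda>i. t * u i) \<le> (\<Sum>i<n. \<bar>t * u i - t * c i\<bar>)"
      using cone_dist_le[OF C_scale[OF c t]] by simp
    also have "\<dots> = t * (\<Sum>i<n. \<bar>u i - c i\<bar>)"
      using t by (simp add: sum_distrib_left abs_mult flip: right_diff_distrib)
    finally show "?q (\<lambda>i. t * u i) / t \<le> (\<Sum>i<n. \<bar>u i - c i\<bar>)"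
      using t by (simp add: field_simps)
  qed auto
  then show ?thesis using t by (simp add: field_simps)
qed

lemma cone_dist_scale: "t > 0 \<Longrightarrow> cone_dist C n (\<lambda>i. t * u i) = t * cone_dist C n u"
  using cone_dist_scale_le[where t=t and u=u and n=n] cone_dist_scale_le[where t="1 / t" and u="\<lambda>i. t * u i" and n=n]
  by (simp add: field_simps)

lemma convex_cone_separation:
  assumes \<epsilon>: "\<epsilon> > 0" and far: "\<And>c. c \<in> C \<Longrightarrow> \<exists>i<n. \<epsilon> \<le> \<bar>c i - p i\<bar>"
  shows "\<exists>a. (\<Sum>i<n. a i * p i) > 0 \<and> (\<forall>c\<in>C. (\<Sum>i<n. a i * c i) \<le> 0)"
proof -
  let ?q = "cone_dist C n"
  obtain a where a: "\<And>t x. \<forall>i\<ge>n. x i = 0 \<Longrightarrow> t * ?q p + (\<Sum>i<n. a i * x i) \<le> ?q (\<lambda>i. t * p i + x i)"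
    using sublinear_dominates_linear[where q="?q", OF cone_dist_subadditive cone_dist_scale cone_dist_nonneg]
    by blast
  have "\<epsilon> \<le> ?q p"
    unfolding cone_dist_def using C0
  proof (intro cINF_greatest)
    fix c assume "c \<in> C"
    then obtain i where i: "i < n" "\<epsilon> \<le> \<bar>c i - p i\<bar>" using far by blast
    have "\<bar>p i - c i\<bar> \<le> (\<Sum>i<n. \<bar>p i - c i\<bar>)" using i by (intro member_le_sum) auto
    then show "\<epsilon> \<le> (\<Sum>i<n. \<bar>p i - c i\<bar>)" using i by (simp add: abs_minus_commute)
  qed auto
  \<comment> \<open>Evaluate the dominated functional at \<open>p - p = 0 \<in> C\<close> and at \<open>c \<in> C\<close>.\<close>
  moreover have "?q p \<le> (\<Sum>i<n. a i * p i)"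
    using a[of "\<lambda>i. if i < n then - p i else 0" 1]
      cone_dist_le[OF C0, of n "\<lambda>i. p i + (if i < n then - p i else 0)"]
    by (simp add: sum_negf)
  moreover have "(\<Sum>i<n. a i * c i) \<le> 0" if "c \<in> C" for c
    using a[of "\<lambda>i. if i < n then c i else 0" 0] cone_dist_le[OF that, of n "\<lambda>i. if i < n then c i else 0"]
    by simp
  ultimately show ?thesis using \<epsilon> by force
qed

end

section \<open>Finite linear combinations of signed measures\<close>

definition add_measure :: "'a measure \<Rightarrow> 'a measure \<Rightarrow> 'a measure" where
  "add_measure M N = measure_of (space M) (sets M) (\<lambda>A. emeasure M A + emeasure N A)"

lemma sets_add_measure [simp]: "sets (add_measure M N) = sets M"
  and space_add_measure [simp]: "space (add_measure M N) = space M"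
  by (auto simp: add_measure_def)

lemma emeasure_add_measure:
  assumes sets_eq: "sets N = sets M" and A: "A \<in> sets M"
  shows "emeasure (add_measure M N) A = emeasure M A + emeasure N A"
  unfolding add_measure_def
proof (rule emeasure_measure_of_sigma)
  show "sigma_algebra (space M) (sets M)" ..
  show "positive (sets M) (\<lambda>A. emeasure M A + emeasure N A)"
    by (simp add: positive_def)
  show "countably_additive (sets M) (\<lambda>A. emeasure M A + emeasure N A)"
  proof (rule countably_additiveI)
    fix A :: "nat \<Rightarrow> _"  assume A: "range A \<subseteq> sets M" and "disjoint_family A"
    then have 1: "(\<Sum>i. emeasure M (A i)) = emeasure M (\<Union>i. A i)"
      and 2: "(\<Sum>i. emeasure N (A i)) = emeasure N (\<Union>i. A i)"
      by (simp_all add: suminf_emeasure sets_eq)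
    have "(\<Sum>i. emeasure M (A i) + emeasure N (A i)) = (\<Sum>i. emeasure M (A i)) + (\<Sum>i. emeasure N (A i))"
      by (rule suminf_add[symmetric]) auto
    then show "(\<Sum>i. emeasure M (A i) + emeasure N (A i)) = emeasure M (\<Union>i. A i) + emeasure N (\<Union>i. A i)"
      by (simp only: 1 2)
  qed
qed fact

lemma nn_integral_measure_split:
  assumes s1: "sets M1 = sets M" and s2: "sets M2 = sets M"
    and em: "\<And>A. A \<in> sets M \<Longrightarrow> emeasure M A = emeasure M1 A + emeasure M2 A"
    and f: "f \<in> borel_measurable M"
  shows "(\<integral>\<^sup>+x. f x \<partial>M) = (\<integral>\<^sup>+x. f x \<partial>M1) + (\<integral>\<^sup>+x. f x \<partial>M2)"
proof -
  have sp1: "space M1 = space M" and sp2: "space M2 = space M"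
    using s1 s2 sets_eq_imp_space_eq by blast+
  have meq1: "measurable M1 N = measurable M N" for N :: "ennreal measure"
    by (rule measurable_cong_sets) (auto simp: s1)
  have meq2: "measurable M2 N = measurable M N" for N :: "ennreal measure"
    by (rule measurable_cong_sets) (auto simp: s2)
  show ?thesis
  using f
  proof (induction f rule: borel_measurable_induct)
    case (cong f g)
    have "(\<integral>\<^sup>+x. f x \<partial>N) = (\<integral>\<^sup>+x. g x \<partial>N)" if "space N = space M" for N
      using cong(3) that by (intro nn_integral_cong) auto
    then show ?case using cong(4) sp1 sp2 by simp
  next
    case (set A)
    then show ?case using em[OF set] by (simp add: s1 s2)
  next
    case (mult u c)
    have "(\<integral>\<^sup>+x. c * u x \<partial>N) = c * (\<integral>\<^sup>+x. u x \<partial>N)" if "u \<in> borel_measurable N" for N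
      using that by (rule nn_integral_cmult)
    then show ?case using mult(2,4) meq1 meq2 by (simp add: distrib_left)
  next
    case (add u v)
    have "(\<integral>\<^sup>+x. v x + u x \<partial>N) = (\<integral>\<^sup>+x. v x \<partial>N) + (\<integral>\<^sup>+x. u x \<partial>N)"
      if "u \<in> borel_measurable N" "v \<in> borel_measurable N" for N
      using that by (intro nn_integral_add) auto
    moreover have "u \<in> borel_measurable M1" "v \<in> borel_measurable M1" "u \<in> borel_measurable M2" "v \<in> borel_measurable M2"
      using add.hyps meq1 meq2 by auto
    ultimately show ?case using add.hyps add.IH by (simp add: algebra_simps)
  next
    case (seq U)
    have SUPf: "(\<Squnion> range U) = (\<lambda>x. SUP i. U i x)" by (rule ext) (simp only: SUP_apply)
    have inc: "incseq (\<lambda>i. \<integral>\<^sup>+x. U i x \<partial>N)" for N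
      using \<open>incseq U\<close> unfolding incseq_def le_fun_def by (auto intro!: nn_integral_mono)
    have mc: "(\<integral>\<^sup>+x. (\<Squnion> range U) x \<partial>N) = (SUP i. \<integral>\<^sup>+x. U i x \<partial>N)"
      if "\<And>i. U i \<in> borel_measurable N" for N
      unfolding SUPf by (rule nn_integral_monotone_convergence_SUP[OF \<open>incseq U\<close> that])
    have m1: "U i \<in> borel_measurable M1" "U i \<in> borel_measurable M2" "U i \<in> borel_measurable M" for i
      using seq.hyps(1)[of i] meq1 meq2 by auto
    have "(SUP i. \<integral>\<^sup>+x. U i x \<partial>M) = (SUP i. (\<integral>\<^sup>+x. U i x \<partial>M1) + (\<integral>\<^sup>+x. U i x \<partial>M2))"
      using seq.IH by (simp only:)
    also have "\<dots> = (SUP i. \<integral>\<^sup>+x. U i x \<partial>M1) + (SUP i. \<integral>\<^sup>+x. U i x \<partial>M2)"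
      by (rule ennreal_SUP_add[OF inc inc])
    finally show ?case unfolding mc[OF m1(1)] mc[OF m1(2)] mc[OF m1(3)] .
  qed
qed

lemma integral_measure_split:
  fixes f :: "'a \<Rightarrow> real"
  assumes s1: "sets M1 = sets M" and s2: "sets M2 = sets M"
    and em: "\<And>A. A \<in> sets M \<Longrightarrow> emeasure M A = emeasure M1 A + emeasure M2 A"
    and f: "f \<in> borel_measurable M" and int1: "integrable M1 f" and int2: "integrable M2 f"
  shows "integral\<^sup>L M f = integral\<^sup>L M1 f + integral\<^sup>L M2 f"
proof -
  have meas: "(\<lambda>x. ennreal (g x)) \<in> borel_measurable M" if "g \<in> borel_measurable M" for g :: "'a \<Rightarrow> real"
    using that by measurable
  have pos: "(\<integral>\<^sup>+x. ennreal (f x) \<partial>M) = (\<integral>\<^sup>+x. ennreal (f x) \<partial>M1) + (\<integral>\<^sup>+x. ennreal (f x) \<partial>M2)"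
    and neg: "(\<integral>\<^sup>+x. ennreal (- f x) \<partial>M) = (\<integral>\<^sup>+x. ennreal (- f x) \<partial>M1) + (\<integral>\<^sup>+x. ennreal (- f x) \<partial>M2)"
    using f by (intro nn_integral_measure_split[OF s1 s2 em] meas; simp)+
  have fin: "(\<integral>\<^sup>+x. ennreal (f x) \<partial>M1) \<noteq> \<infinity>" "(\<integral>\<^sup>+x. ennreal (- f x) \<partial>M1) \<noteq> \<infinity>"
    "(\<integral>\<^sup>+x. ennreal (f x) \<partial>M2) \<noteq> \<infinity>" "(\<integral>\<^sup>+x. ennreal (- f x) \<partial>M2) \<noteq> \<infinity>"
    using int1 int2 by (auto simp: real_integrable_def)
  then have "integrable M f"
    using f by (simp add: real_integrable_def pos neg)
  then show ?thesis
    using int1 int2 fin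
    by (simp add: real_lebesgue_integral_def pos neg enn2real_plus top.not_eq_extremum)
qed

lemma fin_borel_add_measure:
  assumes "fin_borel M" "fin_borel N"
  shows "fin_borel (add_measure M N)"
  unfolding fin_borel_def
proof (intro conjI finite_measureI)
  show "sets (add_measure M N) = sets borel" using assms by (simp add: fin_borel_def)
  have "emeasure (add_measure M N) (space M) = emeasure M (space M) + emeasure N (space N)"
    using assms by (simp add: fin_borel_def emeasure_add_measure sets_eq_imp_space_eq)
  then show "emeasure (add_measure M N) (space (add_measure M N)) \<noteq> \<infinity>"
    using assms by (simp add: fin_borel_def finite_measure.emeasure_finite)
qed

lemma integral_add_measure:
  fixes f :: "'a::topological_space \<Rightarrow> real"
  assumes M: "fin_borel M" and N: "fin_borel N"
    and f: "f \<in> borel_measurable borel" "\<And>x. \<bar>f x\<bar> \<le> B"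
  shows "integral\<^sup>L (add_measure M N) f = integral\<^sup>L M f + integral\<^sup>L N f"
proof (rule integral_measure_split)
  show "sets N = sets (add_measure M N)"
    using M N by (simp add: fin_borel_def)
  show "emeasure (add_measure M N) A = emeasure M A + emeasure N A"
    if "A \<in> sets (add_measure M N)" for A
    using that M N by (simp add: fin_borel_def emeasure_add_measure)
  show "f \<in> borel_measurable (add_measure M N)"
    using fin_borel_measurable[OF fin_borel_add_measure[OF M N] f(1)] .
qed (use assms in \<open>auto intro: fin_borel_integrable\<close>)

lemma fin_borel_density_const: "fin_borel M \<Longrightarrow> fin_borel (density M (\<lambda>_. ennreal r))"
  unfolding fin_borel_def
  by (auto intro!: finite_measureI
           simp: emeasure_density_const finite_measure.emeasure_finite ennreal_mult_eq_top_iff)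

lemma integral_density_const:
  fixes f :: "'a::topological_space \<Rightarrow> real"
  assumes "fin_borel M" "r \<ge> 0" "f \<in> borel_measurable borel"
  shows "integral\<^sup>L (density M (\<lambda>_. ennreal r)) f = r * integral\<^sup>L M f"
  using assms fin_borel_measurable[OF assms(1,3)] by (subst integral_density) auto

lemma ca_linear_combination:
  fixes \<phi> :: "nat \<Rightarrow> 'a::topological_space measure \<times> 'a measure"
  assumes "\<forall>i<n. \<phi> i \<in> ca"
  shows "\<exists>\<psi>\<in>ca. \<forall>f B. f \<in> borel_measurable borel \<longrightarrow> (\<forall>x. \<bar>f x\<bar> \<le> B) \<longrightarrow>
                     pairing \<psi> f = (\<Sum>i<n. a i * pairing (\<phi> i) f)"
  using assms
proof (induction n)
  case 0
  have "(null_measure borel, null_measure borel) \<in> ca"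
    by (auto simp: ca_def fin_borel_def intro!: finite_measureI)
  then show ?case by (force simp: pairing_def)
next
  case (Suc n)
  have "\<forall>i<n. \<phi> i \<in> ca" using Suc.prems by simp
  with Suc.IH obtain \<psi> where \<psi>: "\<psi> \<in> ca"
    "\<forall>f B. f \<in> borel_measurable borel \<longrightarrow> (\<forall>x. \<bar>f x\<bar> \<le> B) \<longrightarrow>
       pairing \<psi> f = (\<Sum>i<n. a i * pairing (\<phi> i) f)"
    by blast
  \<comment> \<open>\<open>a\<^sub>n \<phi>\<^sub>n\<close> as a pair of measures: swap the two parts if \<open>a\<^sub>n < 0\<close>.\<close>
  define P where "P = density (if a n \<ge> 0 then fst (\<phi> n) else snd (\<phi> n)) (\<lambda>_. ennreal \<bar>a n\<bar>)"
  define N where "N = density (if a n \<ge> 0 then snd (\<phi> n) else fst (\<phi> n)) (\<lambda>_. ennreal \<bar>a n\<bar>)"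
  have \<phi>n: "fin_borel (fst (\<phi> n))" "fin_borel (snd (\<phi> n))"
    using Suc.prems by (auto simp: ca_def)
  then have PN: "fin_borel P" "fin_borel N"
    by (auto simp: P_def N_def intro: fin_borel_density_const)
  have "pairing (add_measure (fst \<psi>) P, add_measure (snd \<psi>) N) f = (\<Sum>i<Suc n. a i * pairing (\<phi> i) f)"
    if f: "f \<in> borel_measurable borel" "\<forall>x. \<bar>f x\<bar> \<le> B" for f B
  proof -
    have "integral\<^sup>L P f - integral\<^sup>L N f = a n * pairing (\<phi> n) f"
      using \<phi>n f by (auto simp: P_def N_def integral_density_const pairing_def algebra_simps)
    then show ?thesis
      using \<psi>(1) \<psi>(2)[rule_format, OF f(1) f(2)[rule_format]] PN f
      by (simp add: pairing_def ca_def integral_add_measure[where B=B])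
  qed
  moreover have "(add_measure (fst \<psi>) P, add_measure (snd \<psi>) N) \<in> ca"
    using \<psi>(1) PN by (simp add: ca_def fin_borel_add_measure)
  ultimately show ?case by blast
qed

section \<open>Closed regularity of finite Borel measures\<close>

lemma integral_infdist_cutoff_tendsto:
  fixes M :: "'a::metric_space measure" and F :: "'a set"
  assumes fin: "fin_borel M" and F: "closed F" "F \<noteq> {}"
  shows "(\<lambda>k. integral\<^sup>L M (\<lambda>x. max 0 (1 - real (Suc k) * infdist x F))) \<longlonglongrightarrow> measure M F"
proof -
  have sM: "sets M = sets borel" and fm: "finite_measure M" using fin by (auto simp: fin_borel_def)
  have meq: "borel_measurable M = borel_measurable borel" by (intro measurable_cong_sets) (auto simp: sM)
  have cont: "continuous_on UNIV (\<lambda>x. max 0 (1 - real (Suc k) * infdist x F))" for k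
    by (intro continuous_intros)
  have "(\<lambda>k. integral\<^sup>L M (\<lambda>x. max 0 (1 - real (Suc k) * infdist x F))) \<longlonglongrightarrow> integral\<^sup>L M (indicator F :: 'a \<Rightarrow> real)"
  proof (rule integral_dominated_convergence[where w="\<lambda>_. 1"])
    show "(indicator F :: 'a \<Rightarrow> real) \<in> borel_measurable M"
      unfolding meq using F(1) by (intro borel_measurable_indicator) (simp add: borel_closed)
    show "(\<lambda>x. max 0 (1 - real (Suc k) * infdist x F)) \<in> borel_measurable M" for k
      unfolding meq using cont[of k] by (simp add: borel_measurable_continuous_onI)
    show "integrable M (\<lambda>_. 1::real)" using fm by (simp add: finite_measure.integrable_const)
    show "AE x in M. norm (max 0 (1 - real (Suc k) * infdist x F)) \<le> 1" for k
      by (intro AE_I2) (auto simp: infdist_nonneg)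
    show "AE x in M. (\<lambda>k. max 0 (1 - real (Suc k) * infdist x F)) \<longlonglongrightarrow> indicator F x"
    proof (intro AE_I2)
      fix x
      show "(\<lambda>k. max 0 (1 - real (Suc k) * infdist x F)) \<longlonglongrightarrow> indicator F x"
      proof (cases "x \<in> F")
        case True
        then have "infdist x F = 0" using in_closed_iff_infdist_zero[OF F] by simp
        then show ?thesis using True by simp
      next
        case False
        then have d: "infdist x F > 0" using in_closed_iff_infdist_zero[OF F] infdist_nonneg[of x F] by auto
        obtain N :: nat where N: "1 / infdist x F < N" using reals_Archimedean2 by blast
        have "eventually (\<lambda>k. max 0 (1 - real (Suc k) * infdist x F) = 0) sequentially"
          unfolding eventually_sequentially
        proof (intro exI allI impI)
          fix k assume "N \<le> k"
          then have "1 / infdist x F < real (Suc k)" using N by linarith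
          then have "1 < real (Suc k) * infdist x F" using d by (simp add: field_simps)
          then show "max 0 (1 - real (Suc k) * infdist x F) = 0" by simp
        qed
        then show ?thesis using False by (simp add: tendsto_eventually)
      qed
    qed
  qed
  also have "integral\<^sup>L M (indicator F :: 'a \<Rightarrow> real) = measure M F"
    using sets_eq_imp_space_eq[OF sM] by (simp add: integral_indicator)
  finally show ?thesis .
qed

definition closed_open_regular :: "'a::metric_space measure \<Rightarrow> 'a set \<Rightarrow> bool" where
  "closed_open_regular M A \<longleftrightarrow>
     (\<forall>e>0. \<exists>F U. closed F \<and> open U \<and> F \<subseteq> A \<and> A \<subseteq> U \<and> measure M U \<le> measure M F + e)"

lemma closed_open_regular_closed:
  fixes M :: "'a::metric_space measure"
  assumes M: "fin_borel M" and A: "closed A"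
  shows "closed_open_regular M A"
  unfolding closed_open_regular_def
proof (intro allI impI)
  fix e :: real assume e: "e > 0"
  have sM: "sets M = sets borel" and fm: "finite_measure M" using M by (auto simp: fin_borel_def)
  show "\<exists>F U. closed F \<and> open U \<and> F \<subseteq> A \<and> A \<subseteq> U \<and> measure M U \<le> measure M F + e"
  proof (cases "A = {}")
    case True then show ?thesis using e by (intro exI[of _ "{}"]) auto
  next
    case False
    define U where "U k = {x. infdist x A < 1 / real (Suc k)}" for k
    have oU: "open (U k)" for k unfolding U_def
      by (intro open_Collect_less continuous_intros)
    have dec: "decseq U"
      unfolding decseq_def U_def by (auto simp: frac_le less_le_trans)
    have AU: "A \<subseteq> U k" for k
      unfolding U_def using in_closed_iff_infdist_zero[OF A False] by auto
    have IU: "(\<Inter>k. U k) = A"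
    proof
      show "(\<Inter>k. U k) \<subseteq> A"
      proof
        fix x assume x: "x \<in> (\<Inter>k. U k)"
        have "infdist x A \<le> 0"
        proof (rule field_le_epsilon)
          fix d :: real assume d: "d > 0"
          obtain k :: nat where "1 / d < k" using reals_Archimedean2 by blast
          then have "1 / real (Suc k) < d" using d by (simp add: field_simps)
          moreover have "infdist x A < 1 / real (Suc k)" using x by (auto simp: U_def)
          ultimately show "infdist x A \<le> 0 + d" by simp
        qed
        then show "x \<in> A" using in_closed_iff_infdist_zero[OF A False] infdist_nonneg[of x A] by simp
      qed
    qed (use AU in auto)
    have "(\<lambda>k. measure M (U k)) \<longlonglongrightarrow> measure M (\<Inter>k. U k)"
      using oU dec by (intro finite_measure.finite_Lim_measure_decseq[OF fm]) (auto simp: sM)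
    then have "(\<lambda>k. measure M (U k)) \<longlonglongrightarrow> measure M A" by (simp add: IU)
    then have "eventually (\<lambda>k. measure M (U k) < measure M A + e) sequentially"
      using e by (intro order_tendstoD(2)) auto
    then obtain k where "measure M (U k) < measure M A + e" by (auto simp: eventually_sequentially)
    then show ?thesis using oU[of k] AU[of k] A by (intro exI[of _ A] exI[of _ "U k"]) auto
  qed
qed

lemma closed_open_regular_Compl:
  fixes M :: "'a::metric_space measure"
  assumes M: "fin_borel M" and A: "closed_open_regular M A"
  shows "closed_open_regular M (UNIV - A)"
  unfolding closed_open_regular_def
proof (intro allI impI)
  fix e :: real assume "e > 0"
  from A[unfolded closed_open_regular_def, rule_format, OF this] obtain F U where
    FU: "closed F" "open U" "F \<subseteq> A" "A \<subseteq> U" "measure M U \<le> measure M F + e"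
    by blast
  have sM: "sets M = sets borel" and fm: "finite_measure M" using M by (auto simp: fin_borel_def)
  have spM: "space M = UNIV" using sets_eq_imp_space_eq[OF sM] by simp
  have "measure M (UNIV - F) = measure M UNIV - measure M F"
    using finite_measure.finite_measure_compl[OF fm, of F] FU(1) by (simp add: spM sM)
  moreover have "measure M (UNIV - U) = measure M UNIV - measure M U"
    using finite_measure.finite_measure_compl[OF fm, of U] FU(2) by (simp add: spM sM)
  ultimately show "\<exists>F' U'. closed F' \<and> open U' \<and> F' \<subseteq> UNIV - A \<and> UNIV - A \<subseteq> U' \<and> measure M U' \<le> measure M F' + e"
    using FU by (intro exI[of _ "UNIV - U"] exI[of _ "UNIV - F"]) auto
qed

lemma finite_measure_UN_le_suminf:
  assumes M: "finite_measure M" and A: "\<And>i. A i \<in> sets M"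
    and le: "\<And>i. measure M (A i) \<le> \<delta> i" and \<delta>: "summable \<delta>"
  shows "measure M (\<Union>i. A i) \<le> (\<Sum>i. \<delta> i)"
proof -
  have "summable (\<lambda>i. measure M (A i))"
    using le by (intro summable_comparison_test[OF _ \<delta>]) auto
  then have "measure M (\<Union>i. A i) \<le> (\<Sum>i. measure M (A i))"
    using A by (intro finite_measure.finite_measure_subadditive_countably[OF M]) auto
  also have "\<dots> \<le> (\<Sum>i. \<delta> i)"
    using le \<delta> \<open>summable (\<lambda>i. measure M (A i))\<close> by (intro suminf_le) auto
  finally show ?thesis .
qed

lemma finite_measure_UN_approx_finite:
  fixes A :: "nat \<Rightarrow> 'a set"
  assumes M: "finite_measure M" and A: "\<And>i. A i \<in> sets M" and e: "e > 0"
  obtains N where "measure M (\<Union>i. A i) < measure M (\<Union>i<N. A i) + e"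
proof -
  have "(\<lambda>n. measure M (\<Union>i<n. A i)) \<longlonglongrightarrow> measure M (\<Union>n. \<Union>i<n. A i)"
    using A by (intro finite_measure.finite_Lim_measure_incseq[OF M]) (force simp: incseq_def)+
  also have "(\<Union>n. \<Union>i<n. A i) = (\<Union>i. A i)" by auto
  finally have "eventually (\<lambda>n. measure M (\<Union>i. A i) - e < measure M (\<Union>i<n. A i)) sequentially"
    using e by (intro order_tendstoD(1)) auto
  then obtain N where "measure M (\<Union>i. A i) - e < measure M (\<Union>i<N. A i)"
    by (auto simp: eventually_sequentially)
  then show thesis by (intro that[of N]) simp
qed

lemma closed_open_regular_UN:
  fixes M :: "'a::metric_space measure" and A :: "nat \<Rightarrow> 'a set"
  assumes M: "fin_borel M" and A: "range A \<subseteq> sets borel" and reg: "\<And>i. closed_open_regular M (A i)"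
  shows "closed_open_regular M (\<Union>(range A))"
  unfolding closed_open_regular_def
proof (intro allI impI)
  fix e :: real assume e: "e > 0"
  have sM: "sets M = sets borel" and fm: "finite_measure M" using M by (auto simp: fin_borel_def)
  have Ab: "A i \<in> sets M" for i using A sM by auto
  have mono: "measure M S \<le> measure M T" if "S \<subseteq> T" "T \<in> sets M" for S T
    using that by (intro finite_measure.finite_measure_mono[OF fm])
  define \<delta> where "\<delta> i = e / 8 * (1/2) ^ i" for i :: nat
  have \<delta>sum: "summable \<delta>" unfolding \<delta>_def by (intro summable_mult summable_geometric) simp
  have \<delta>val: "(\<Sum>i. \<delta> i) = e / 4" unfolding \<delta>_def
    by (subst suminf_mult) (auto simp: suminf_geometric)
  have "\<delta> i > 0" for i using e by (simp add: \<delta>_def)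
  then have "\<forall>i. \<exists>F U. closed F \<and> open U \<and> F \<subseteq> A i \<and> A i \<subseteq> U \<and> measure M U \<le> measure M F + \<delta> i"
    using reg[unfolded closed_open_regular_def] by blast
  then obtain F U where FU: "\<And>i. closed (F i)" "\<And>i. open (U i)" "\<And>i. F i \<subseteq> A i" "\<And>i. A i \<subseteq> U i"
    "\<And>i. measure M (U i) \<le> measure M (F i) + \<delta> i"
    by metis
  have Fb: "F i \<in> sets M" "U i \<in> sets M" for i using FU(1,2) sM by auto
  \<comment> \<open>\<open>U' := \<Union>U\<^sub>i\<close> exceeds \<open>\<Union>A\<^sub>i\<close> by at most \<open>D\<close>; a finite union \<open>F'\<close> of the \<open>F\<^sub>i\<close>
      misses at most \<open>D\<close> and a tail of the \<open>A\<^sub>i\<close>.\<close>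
  define D where "D = (\<Union>i. U i - F i)"
  have Db: "D \<in> sets M" unfolding D_def using Fb by auto
  have mD: "measure M (U i - F i) \<le> \<delta> i" for i
    using finite_measure.finite_measure_Diff[OF fm Fb(2) Fb(1)] FU(3,4)[of i] FU(5)[of i] by auto
  have "measure M D \<le> (\<Sum>i. \<delta> i)"
    unfolding D_def using Fb mD \<delta>sum by (intro finite_measure_UN_le_suminf[OF fm]) auto
  then have mDe: "measure M D \<le> e / 4" using \<delta>val by simp
  define A' where "A' = (\<Union>(range A))"
  have A'b: "A' \<in> sets M" unfolding A'_def using Ab by auto
  have "e / 4 > 0" using e by simp
  obtain N where "measure M (\<Union>i. A i) < measure M (\<Union>i<N. A i) + e / 4"
    by (rule finite_measure_UN_approx_finite[OF fm Ab \<open>e / 4 > 0\<close>])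
  then have N: "measure M A' < measure M (\<Union>i<N. A i) + e / 4" by (simp add: A'_def)
  define F' where "F' = (\<Union>i<N. F i)"
  have cF': "closed F'" unfolding F'_def using FU(1) by (intro closed_UN) auto
  have F'b: "F' \<in> sets M" using cF' sM by auto
  have "(\<Union>i<N. A i) \<subseteq> F' \<union> D" unfolding F'_def D_def using FU(4) by blast
  then have "measure M (\<Union>i<N. A i) \<le> measure M (F' \<union> D)"
    using F'b Db by (intro mono) auto
  also have "\<dots> \<le> measure M F' + measure M D"
    using F'b Db by (intro measure_Un_le) auto
  finally have mA': "measure M A' < measure M F' + e/2" using N mDe by simp
  define U' where "U' = (\<Union>i. U i)"
  have "U' \<subseteq> A' \<union> D" unfolding U'_def A'_def D_def using FU(3) by blast
  then have "measure M U' \<le> measure M (A' \<union> D)"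
    using A'b Db by (intro mono) auto
  also have "\<dots> \<le> measure M A' + measure M D"
    using A'b Db by (intro measure_Un_le) auto
  finally have "measure M U' \<le> measure M F' + e" using mA' mDe e by linarith
  moreover have "open U'" unfolding U'_def using FU(2) by auto
  moreover have "F' \<subseteq> \<Union>(range A)" unfolding F'_def using FU(3) by blast
  moreover have "\<Union>(range A) \<subseteq> U'" unfolding U'_def using FU(4) by blast
  ultimately show "\<exists>F U. closed F \<and> open U \<and> F \<subseteq> \<Union>(range A) \<and> \<Union>(range A) \<subseteq> U \<and> measure M U \<le> measure M F + e"
    using cF' by blast
qed

lemma closed_open_regular_borel:
  fixes M :: "'a::metric_space measure"
  assumes M: "fin_borel M" and A: "A \<in> sets borel"
  shows "closed_open_regular M A"
proof -
  have sb: "sets borel = sigma_sets (UNIV :: 'a set) (Collect closed)"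
    by (subst borel_eq_closed) (simp add: sets_measure_of)
  have Ist: "Int_stable (Collect closed :: 'a set set)" by (auto simp: Int_stable_def)
  have Pw: "Collect closed \<subseteq> Pow (UNIV :: 'a set)" by simp
  show ?thesis using A unfolding sb
  proof (rule sigma_sets_induct_disjoint[OF Ist Pw])
    show "closed_open_regular M A" if "A \<in> Collect closed" for A
      using M that by (simp add: closed_open_regular_closed)
    show "closed_open_regular M {}"
      using M by (simp add: closed_open_regular_closed)
    show "closed_open_regular M (UNIV - A)" if "closed_open_regular M A" for A
      using M that by (rule closed_open_regular_Compl)
    show "closed_open_regular M (\<Union>(range A))"
      if "range A \<subseteq> sigma_sets UNIV (Collect closed)" "\<And>i. closed_open_regular M (A i)" for A :: "nat \<Rightarrow> 'a set"
      using M that by (intro closed_open_regular_UN) (auto simp: sb)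
  qed
qed

lemma measure_le_if_integral_le:
  fixes M N :: "'a::metric_space measure"
  assumes M: "fin_borel M" and N: "fin_borel N"
    and le: "\<And>f::'a \<Rightarrow> real. continuous_on UNIV f \<Longrightarrow> (\<And>x. 0 \<le> f x) \<Longrightarrow> (\<And>x. f x \<le> 1) \<Longrightarrow>
               integral\<^sup>L N f \<le> integral\<^sup>L M f"
    and A: "A \<in> sets borel"
  shows "measure N A \<le> measure M A"
proof (rule field_le_epsilon)
  have closed_le: "measure N F \<le> measure M F" if F: "closed F" for F
  proof (cases "F = {}")
    case False
    have "integral\<^sup>L N (\<lambda>x. max 0 (1 - real (Suc k) * infdist x F))
          \<le> integral\<^sup>L M (\<lambda>x. max 0 (1 - real (Suc k) * infdist x F))" for k
      by (rule le) (auto intro!: continuous_intros simp: infdist_nonneg)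
    then show ?thesis
      using F False by (intro LIMSEQ_le[OF integral_infdist_cutoff_tendsto[OF N] integral_infdist_cutoff_tendsto[OF M]]) auto
  qed simp
  fix e :: real assume "e > 0"
  from closed_open_regular_borel[OF N A, unfolded closed_open_regular_def, rule_format, OF this]
  obtain F U where F: "closed F" "F \<subseteq> A" "A \<subseteq> U" "open U" "measure N U \<le> measure N F + e"
    by blast
  have "measure N A \<le> measure N U" "measure M F \<le> measure M A"
    using M N A F by (auto simp: fin_borel_def intro!: finite_measure.finite_measure_mono)
  then show "measure N A \<le> measure M A + e" using F(5) closed_le[OF F(1)] by linarith
qed

section \<open>Separation from the weak closure of a cone\<close>

lemma pairing_linear_combination_Cfun:
  fixes \<phi> :: "nat \<Rightarrow> 'a::metric_space measure \<times> 'a measure"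
  assumes cpt: "compact (UNIV :: 'a set)" and "\<forall>i<n. \<phi> i \<in> ca"
  obtains \<psi> where "\<psi> \<in> ca" "\<And>f. f \<in> Cfun \<Longrightarrow> pairing \<psi> f = (\<Sum>i<n. a i * pairing (\<phi> i) f)"
proof -
  obtain \<psi> where \<psi>_ca: "\<psi> \<in> ca" and \<psi>: "\<forall>f B. f \<in> borel_measurable borel \<longrightarrow> (\<forall>x. \<bar>f x\<bar> \<le> B) \<longrightarrow>
      pairing \<psi> f = (\<Sum>i<n. a i * pairing (\<phi> i) f)"
    using ca_linear_combination[OF assms(2)] by blast
  have "pairing \<psi> f = (\<Sum>i<n. a i * pairing (\<phi> i) f)" if f: "f \<in> Cfun" for f
  proof -
    obtain B where "\<forall>x. \<bar>f x\<bar> \<le> B" using Cfun_bounded[OF cpt f] by blast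
    then show ?thesis using \<psi> Cfun_borel_measurable[OF f] by blast
  qed
  then show thesis by (rule that[OF \<psi>_ca])
qed

lemma weak_closure_separation:
  fixes K :: "('a::metric_space \<Rightarrow> real) set"
  assumes cpt: "compact (UNIV :: 'a set)"
    and K: "K \<subseteq> Cfun" "(\<lambda>_. 0) \<in> K"
    and K_add: "\<And>u v. u \<in> K \<Longrightarrow> v \<in> K \<Longrightarrow> (\<lambda>x. u x + v x) \<in> K"
    and K_scale: "\<And>u t. u \<in> K \<Longrightarrow> t > 0 \<Longrightarrow> (\<lambda>x. t * u x) \<in> K"
    and g: "g \<in> Cfun" "g \<notin> weak_top closure_of K"
  shows "\<exists>\<psi>\<in>ca. pairing \<psi> g > 0 \<and> (\<forall>k\<in>K. pairing \<psi> k \<le> 0)"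
proof -
  from g obtain T where T: "openin weak_top T" "g \<in> T" "\<forall>k\<in>K. k \<notin> T"
    unfolding in_closure_of topspace_weak_top by blast
  from openin_weak_top_nhd[OF T(1,2)] obtain \<Phi> \<epsilon> where \<Phi>: "finite \<Phi>" "\<Phi> \<subseteq> ca" "\<epsilon> > 0"
    "{f \<in> Cfun. \<forall>\<phi>\<in>\<Phi>. \<bar>pairing \<phi> f - pairing \<phi> g\<bar> < \<epsilon>} \<subseteq> T"
    by blast
  obtain n :: nat and \<phi> where \<phi>: "\<Phi> = \<phi> ` {i. i < n}"
    using finite_imp_nat_seg_image_inj_on[OF \<Phi>(1)] by (elim exE conjE)
  \<comment> \<open>Evaluate at the finitely many functionals of the neighbourhood; \<open>K\<close> becomes a convex cone
      in \<open>\<real>\<^sup>n\<close> at distance \<open>\<epsilon>\<close> from the image of \<open>g\<close>.\<close>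
  define ev where "ev f = (\<lambda>i. if i < n then pairing (\<phi> i) f else 0)" for f
  have \<phi>_ca: "\<forall>i<n. \<phi> i \<in> ca" using \<Phi>(2) \<phi> by auto
  have ev_add: "ev (\<lambda>x. u x + v x) = (\<lambda>i. ev u i + ev v i)" if "u \<in> Cfun" "v \<in> Cfun" for u v
    using that \<phi>_ca by (auto simp: ev_def pairing_add[OF cpt])
  have ev_scale: "ev (\<lambda>x. t * u x) = (\<lambda>i. t * ev u i)" for t u
    by (auto simp: ev_def pairing_scale)
  have "\<exists>a. (\<Sum>i<n. a i * ev g i) > 0 \<and> (\<forall>c\<in>ev ` K. (\<Sum>i<n. a i * c i) \<le> 0)"
  proof (rule convex_cone_separation[OF _ _ _ \<Phi>(3)])
    show "(\<lambda>_. 0) \<in> ev ` K"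
    proof
      show "(\<lambda>_. 0) = ev (\<lambda>_. 0)" using ev_scale[of 0 "\<lambda>_. 0"] by simp
    qed (rule K(2))
    show "(\<lambda>i. u i + v i) \<in> ev ` K" if uv: "u \<in> ev ` K" "v \<in> ev ` K" for u v
    proof -
      obtain k1 k2 where k: "k1 \<in> K" "k2 \<in> K" "u = ev k1" "v = ev k2" using uv by blast
      then have "(\<lambda>i. u i + v i) = ev (\<lambda>x. k1 x + k2 x)" using ev_add[OF subsetD[OF K(1) k(1)] subsetD[OF K(1) k(2)]] k(3,4) by simp
      then show ?thesis by (rule image_eqI[OF _ K_add[OF k(1,2)]])
    qed
    show "(\<lambda>i. t * u i) \<in> ev ` K" if u: "u \<in> ev ` K" and "t > 0" for u t
    proof -
      obtain k where k: "k \<in> K" "u = ev k" using u by blast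
      then have "(\<lambda>i. t * u i) = ev (\<lambda>x. t * k x)" using ev_scale[of t k] by simp
      then show ?thesis by (rule image_eqI[OF _ K_scale[OF k(1) \<open>t > 0\<close>]])
    qed
    show "\<exists>i<n. \<epsilon> \<le> \<bar>c i - ev g i\<bar>" if "c \<in> ev ` K" for c
    proof -
      obtain k where k: "k \<in> K" "c = ev k" using \<open>c \<in> ev ` K\<close> by blast
      then have "\<not> (\<forall>\<phi>\<in>\<Phi>. \<bar>pairing \<phi> k - pairing \<phi> g\<bar> < \<epsilon>)"
        using T(3) \<Phi>(4) K(1) by blast
      then obtain i where "i < n" "\<epsilon> \<le> \<bar>pairing (\<phi> i) k - pairing (\<phi> i) g\<bar>"
        unfolding \<phi> by (auto simp: not_less)
      then show ?thesis using k by (auto simp: ev_def)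
    qed
  qed
  then obtain a where a: "(\<Sum>i<n. a i * ev g i) > 0" "\<And>k. k \<in> K \<Longrightarrow> (\<Sum>i<n. a i * ev k i) \<le> 0"
    by blast
  obtain \<psi> where \<psi>: "\<psi> \<in> ca" "\<And>f. f \<in> Cfun \<Longrightarrow> pairing \<psi> f = (\<Sum>i<n. a i * pairing (\<phi> i) f)"
    using pairing_linear_combination_Cfun[OF cpt \<phi>_ca] by blast
  have \<psi>_ev: "pairing \<psi> f = (\<Sum>i<n. a i * ev f i)" if "f \<in> Cfun" for f
    using \<psi>(2)[OF that] by (simp add: ev_def)
  have "pairing \<psi> k \<le> 0" if "k \<in> K" for k
    using \<psi>_ev[of k] a(2)[OF that] K(1) that by auto
  then show ?thesis using \<psi>(1) \<psi>_ev[OF g(1)] a(1) by (intro bexI[of _ \<psi>]) auto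
qed

lemma ca_nonneg_imp_measure:
  fixes \<psi> :: "'a::metric_space measure \<times> 'a measure"
  assumes \<psi>: "\<psi> \<in> ca"
    and nonneg: "\<And>f. continuous_on UNIV f \<Longrightarrow> (\<And>x. 0 \<le> f x) \<Longrightarrow> (\<And>x. f x \<le> 1) \<Longrightarrow> 0 \<le> pairing \<psi> f"
  shows "\<exists>Q. fin_borel Q \<and> (\<forall>f B. f \<in> borel_measurable borel \<longrightarrow> (\<forall>x. \<bar>f x\<bar> \<le> B) \<longrightarrow>
                                 pairing \<psi> f = integral\<^sup>L Q f)"
proof -
  define Mp where "Mp = fst \<psi>"
  define Mn where "Mn = snd \<psi>"
  have Mp: "fin_borel Mp" and Mn: "fin_borel Mn" using \<psi> by (auto simp: ca_def Mp_def Mn_def)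
  then have sets: "sets Mp = sets borel" "sets Mn = sets borel"
    and fin: "finite_measure Mp" "finite_measure Mn" by (auto simp: fin_borel_def)
  have le: "emeasure Mn A \<le> emeasure Mp A" if "A \<in> sets Mp" for A
  proof -
    have "measure Mn A \<le> measure Mp A"
      using that sets nonneg by (intro measure_le_if_integral_le[OF Mp Mn]) (auto simp: pairing_def Mp_def Mn_def)
    then show ?thesis
      using that sets by (simp add: finite_measure.emeasure_eq_measure[OF fin(1)] finite_measure.emeasure_eq_measure[OF fin(2)])
  qed
  define Q where "Q = diff_measure Mp Mn"
  have sets_Q: "sets Q = sets borel" using sets by (simp add: Q_def)
  have emeasure_Q: "emeasure Q A = emeasure Mp A - emeasure Mn A" if "A \<in> sets Mp" for A
    unfolding Q_def using fin sets le that by (intro emeasure_diff_measure) auto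
  have split: "emeasure Mp A = emeasure Q A + emeasure Mn A" if "A \<in> sets Mp" for A
    using emeasure_Q[OF that] le[OF that] by (simp add: diff_add_cancel_ennreal)
  have Q: "fin_borel Q"
    unfolding fin_borel_def
  proof (intro conjI finite_measureI sets_Q)
    have "emeasure Q (space Q) \<le> emeasure Mp (space Mp)"
      using split[of "space Mp"] sets_Q sets by (simp add: sets_eq_imp_space_eq)
    then show "emeasure Q (space Q) \<noteq> \<infinity>"
      using finite_measure.emeasure_finite[OF fin(1)] by (auto simp: top_unique)
  qed
  have "pairing \<psi> f = integral\<^sup>L Q f"
    if f: "f \<in> borel_measurable borel" "\<forall>x. \<bar>f x\<bar> \<le> B" for f B
  proof -
    have "integral\<^sup>L Mp f = integral\<^sup>L Q f + integral\<^sup>L Mn f"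
      using sets sets_Q split f fin_borel_measurable[OF Mp f(1)]
      by (intro integral_measure_split fin_borel_integrable[OF Q] fin_borel_integrable[OF Mn]) auto
    then show ?thesis by (simp add: pairing_def Mp_def Mn_def)
  qed
  with Q show ?thesis by blast
qed

lemma fin_borel_normalise:
  fixes Q :: "'a::topological_space measure"
  assumes Q: "fin_borel Q" and nonzero: "integral\<^sup>L Q g \<noteq> 0"
  shows "\<exists>P\<in>Prob. \<exists>c>0. \<forall>f\<in>borel_measurable borel. expect P f = c * integral\<^sup>L Q f"
proof -
  define m where "m = measure Q (space Q)"
  have emeasure_Q: "emeasure Q (space Q) = ennreal m"
    using Q by (simp add: m_def fin_borel_def finite_measure.emeasure_eq_measure)
  have "m \<noteq> 0"
  proof
    assume "m = 0"
    then have "space Q \<in> null_sets Q" using emeasure_Q by (simp add: null_sets_def)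
    then have "integral\<^sup>L Q g = 0" by (intro integral_eq_zero_AE AE_I'[where N="space Q"]) auto
    with nonzero show False ..
  qed
  then have m: "m > 0" by (simp add: m_def order_less_le)
  define P where "P = density Q (\<lambda>_. ennreal (1 / m))"
  have "emeasure P (space P) = ennreal (1 / m) * ennreal m"
    by (simp add: P_def emeasure_density_const emeasure_Q)
  also have "\<dots> = 1" using m by (simp flip: ennreal_mult)
  finally have "P \<in> Prob"
    using Q by (auto simp: Prob_def P_def fin_borel_def intro: prob_spaceI)
  moreover have "expect P f = 1 / m * integral\<^sup>L Q f" if "f \<in> borel_measurable borel" for f
    using m integral_density_const[OF Q _ that, of "1 / m"] by (simp add: expect_def P_def)
  ultimately show ?thesis using m by (intro bexI[of _ P] exI[of _ "1 / m"]) auto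
qed

definition Cfun_cone :: "('a::topological_space \<Rightarrow> real) set \<Rightarrow> bool" where
  "Cfun_cone K \<longleftrightarrow> K \<subseteq> Cfun \<and> (\<forall>u\<in>K. \<forall>v\<in>K. (\<lambda>x. u x + v x) \<in> K) \<and>
     (\<forall>u\<in>K. \<forall>t>0. (\<lambda>x. t * u x) \<in> K) \<and> (\<forall>f\<in>Cfun. (\<forall>x. f x \<le> 0) \<longrightarrow> f \<in> K)"

lemma Prob_separation:
  fixes K :: "('a::metric_space \<Rightarrow> real) set"
  assumes cpt: "compact (UNIV :: 'a set)" and K: "Cfun_cone K"
    and g: "g \<in> Cfun" "g \<notin> weak_top closure_of K"
  shows "\<exists>P\<in>Prob. expect P g > 0 \<and> (\<forall>k\<in>K. expect P k \<le> 0)"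
proof -
  have KC: "K \<subseteq> Cfun" and K_nonpos: "\<And>f. f \<in> Cfun \<Longrightarrow> \<forall>x. f x \<le> 0 \<Longrightarrow> f \<in> K"
    using K by (auto simp: Cfun_cone_def)
  have "\<exists>\<psi>\<in>ca. pairing \<psi> g > 0 \<and> (\<forall>k\<in>K. pairing \<psi> k \<le> 0)"
    using K g by (intro weak_closure_separation[OF cpt]) (auto simp: Cfun_cone_def Cfun_const)
  then obtain \<psi> where \<psi>: "\<psi> \<in> ca" "pairing \<psi> g > 0" "\<And>k. k \<in> K \<Longrightarrow> pairing \<psi> k \<le> 0"
    by blast
  \<comment> \<open>\<open>K\<close> contains all nonpositive functions, so \<open>\<psi>\<close> is a positive functional.\<close>
  have "0 \<le> pairing \<psi> f"
    if "continuous_on UNIV f" "\<And>x. 0 \<le> f x" for f :: "'a \<Rightarrow> real"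
  proof -
    have "(\<lambda>x. (-1) * f x) \<in> K"
      using that by (intro K_nonpos Cfun_scale) (auto simp: Cfun_def)
    then show ?thesis using \<psi>(3) pairing_scale[of \<psi> "-1" f] by fastforce
  qed
  then obtain Q where Q: "fin_borel Q"
    and Q_eq: "\<And>f B. f \<in> borel_measurable borel \<Longrightarrow> \<forall>x. \<bar>f x\<bar> \<le> B \<Longrightarrow> pairing \<psi> f = integral\<^sup>L Q f"
    using ca_nonneg_imp_measure[OF \<psi>(1)] by blast
  have Q_Cfun: "pairing \<psi> f = integral\<^sup>L Q f" if f: "f \<in> Cfun" for f
  proof -
    obtain B where "\<forall>x. \<bar>f x\<bar> \<le> B" using Cfun_bounded[OF cpt f] by blast
    then show ?thesis by (rule Q_eq[OF Cfun_borel_measurable[OF f]])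
  qed
  have "integral\<^sup>L Q g \<noteq> 0" using \<psi>(2) Q_Cfun[OF g(1)] by simp
  from fin_borel_normalise[OF Q this] obtain P c where
    P: "P \<in> Prob" "c > 0" "\<forall>f\<in>borel_measurable borel. expect P f = c * integral\<^sup>L Q f"
    by blast
  have E: "expect P f = c * pairing \<psi> f" if "f \<in> Cfun" for f
    using P(3) Cfun_borel_measurable[OF that] Q_Cfun[OF that] by simp
  show ?thesis
  proof (intro bexI[OF _ P(1)] conjI ballI)
    show "expect P g > 0" using E[OF g(1)] \<psi>(2) P(2) by simp
    show "expect P k \<le> 0" if "k \<in> K" for k
      using E[of k] KC that \<psi>(3)[OF that] P(2) by (auto simp: mult_nonneg_nonpos)
  qed
qed

lemma closure_of_Cfun_cone:
  fixes K :: "('a::metric_space \<Rightarrow> real) set"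
  assumes cpt: "compact (UNIV :: 'a set)" and K: "Cfun_cone K"
  shows "weak_top closure_of K = {g \<in> Cfun. \<forall>P\<in>Prob. (\<forall>k\<in>K. expect P k \<le> 0) \<longrightarrow> expect P g \<le> 0}"
    (is "_ = ?polar")
proof
  have KC: "K \<subseteq> Cfun" using K by (simp add: Cfun_cone_def)
  have "weak_top closure_of K \<subseteq> {f \<in> Cfun. expect P f \<le> 0}"
    if "P \<in> Prob" "\<forall>k\<in>K. expect P k \<le> 0" for P
  proof (rule closure_of_minimal)
    show "K \<subseteq> {f \<in> Cfun. expect P f \<le> 0}" using KC that(2) by blast
  qed (rule closedin_weak_top_expect_le[OF that(1)])
  moreover have "weak_top closure_of K \<subseteq> Cfun"
    using closure_of_subset_topspace[of weak_top K] by (simp add: topspace_weak_top)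
  ultimately show "weak_top closure_of K \<subseteq> ?polar" by blast
  show "?polar \<subseteq> weak_top closure_of K"
  proof
    fix g assume g: "g \<in> ?polar"
    show "g \<in> weak_top closure_of K"
    proof (rule ccontr)
      assume "g \<notin> weak_top closure_of K"
      with g obtain P where "P \<in> Prob" "expect P g > 0" "\<forall>k\<in>K. expect P k \<le> 0"
        using Prob_separation[OF cpt K, of g] by blast
      with g show False by auto
    qed
  qed
qed

section \<open>Elicitation, identification and the two cones\<close>

lemma spr_convex_combination:
  fixes s :: "'a::topological_space \<Rightarrow> 'v \<Rightarrow> real"
  assumes conv: "convex_fset (spr s V)" and s: "\<forall>c\<in>V. (\<lambda>y. s y c) \<in> Cfun"
    and c: "c1 \<in> V" "c2 \<in> V" and t: "0 \<le> t" "t \<le> 1"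
  obtains c where "c \<in> V" "\<forall>y. s y c \<le> t * s y c1 + (1 - t) * s y c2"
proof -
  have "(\<lambda>y. s y c1) \<in> spr s V" "(\<lambda>y. s y c2) \<in> spr s V"
    using s c by (auto simp: spr_def)
  then have "(\<lambda>y. t * s y c1 + (1 - t) * s y c2) \<in> spr s V"
    using conv t unfolding convex_fset_def by simp
  then show thesis using that by (auto simp: spr_def)
qed

lemma Cfun_cone_score_differences:
  fixes s :: "'a::topological_space \<Rightarrow> 'v \<Rightarrow> real"
  assumes s: "\<forall>c\<in>V. (\<lambda>y. s y c) \<in> Cfun" and conv: "convex_fset (spr s V)" and \<gamma>: "\<gamma> \<in> V"
  shows "Cfun_cone {g \<in> Cfun. \<exists>\<beta>\<ge>0. \<exists>c\<in>V. \<forall>y. g y \<le> \<beta> * (s y \<gamma> - s y c)}"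
    (is "Cfun_cone ?A")
proof -
  \<comment> \<open>This is where convexity of the superprediction set enters.\<close>
  have add: "\<exists>\<beta>\<ge>0. \<exists>c\<in>V. \<forall>y. b1 * (s y \<gamma> - s y c1) + b2 * (s y \<gamma> - s y c2) \<le> \<beta> * (s y \<gamma> - s y c)"
    if b: "b1 \<ge> 0" "b2 \<ge> 0" and c: "c1 \<in> V" "c2 \<in> V" for b1 b2 c1 c2
  proof (cases "b1 + b2 = 0")
    case True
    then have "b1 = 0" "b2 = 0" using b by auto
    then show ?thesis using c by (intro exI[of _ 0] bexI[of _ c1]) auto
  next
    case False
    define B where "B = b1 + b2"
    have B: "B > 0" using False b by (simp add: B_def)
    obtain c where "c \<in> V" and c_le: "\<forall>y. s y c \<le> b1 / B * s y c1 + (1 - b1 / B) * s y c2"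
      using spr_convex_combination[OF conv s c, of "b1 / B"] b B by (auto simp: B_def)
    have Bt: "B * (b1 / B) = b1" "B * (1 - b1 / B) = b2"
      using B by (auto simp: B_def field_simps)
    have "b1 * (s y \<gamma> - s y c1) + b2 * (s y \<gamma> - s y c2)
          = B * (s y \<gamma> - (b1 / B * s y c1 + (1 - b1 / B) * s y c2))" for y
    proof -
      have "B * (s y \<gamma> - (b1 / B * s y c1 + (1 - b1 / B) * s y c2))
            = B * s y \<gamma> - (B * (b1 / B)) * s y c1 - (B * (1 - b1 / B)) * s y c2"
        by (simp add: algebra_simps)
      from this[unfolded Bt] show ?thesis by (simp add: B_def algebra_simps)
    qed
    also have "\<dots> y \<le> B * (s y \<gamma> - s y c)" for y
      using c_le[rule_format, of y] B by (intro mult_left_mono) auto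
    finally show ?thesis using \<open>c \<in> V\<close> B by (intro exI[of _ B] bexI[of _ c]) auto
  qed
  show ?thesis
    unfolding Cfun_cone_def
  proof (intro conjI ballI allI impI)
    show "?A \<subseteq> Cfun" by blast
    fix u v assume "u \<in> ?A" "v \<in> ?A"
    then obtain b1 c1 b2 c2 where u: "u \<in> Cfun" "b1 \<ge> 0" "c1 \<in> V" "\<forall>y. u y \<le> b1 * (s y \<gamma> - s y c1)"
      and v: "v \<in> Cfun" "b2 \<ge> 0" "c2 \<in> V" "\<forall>y. v y \<le> b2 * (s y \<gamma> - s y c2)"
      by blast
    then obtain \<beta> c where "\<beta> \<ge> 0" "c \<in> V"
      and le: "\<forall>y. b1 * (s y \<gamma> - s y c1) + b2 * (s y \<gamma> - s y c2) \<le> \<beta> * (s y \<gamma> - s y c)"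
      using add by blast
    have "\<forall>y. u y + v y \<le> \<beta> * (s y \<gamma> - s y c)"
    proof
      fix y
      show "u y + v y \<le> \<beta> * (s y \<gamma> - s y c)"
        using add_mono[OF u(4)[rule_format, of y] v(4)[rule_format, of y]] le[rule_format, of y] by linarith
    qed
    then show "(\<lambda>x. u x + v x) \<in> ?A"
      using \<open>\<beta> \<ge> 0\<close> \<open>c \<in> V\<close> u(1) v(1) by (auto intro: Cfun_add)
  next
    fix u and t :: real assume "u \<in> ?A" "t > 0"
    then obtain b c where "u \<in> Cfun" "b \<ge> 0" "c \<in> V" "\<forall>y. u y \<le> b * (s y \<gamma> - s y c)"
      by blast
    with \<open>t > 0\<close> show "(\<lambda>x. t * u x) \<in> ?A"
      by (auto intro!: exI[of _ "t * b"] bexI[of _ c] Cfun_scale simp: mult.assoc mult_left_mono)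
  next
    fix f :: "'a \<Rightarrow> real" assume "f \<in> Cfun" "\<forall>x. f x \<le> 0"
    then show "f \<in> ?A" using \<gamma> by (auto intro!: exI[of _ 0])
  qed
qed

lemma Cfun_cone_identification_multiples:
  fixes \<nu> :: "'a::topological_space \<Rightarrow> 'v \<Rightarrow> real"
  assumes "(\<lambda>y. \<nu> y \<gamma>) \<in> Cfun"
  shows "Cfun_cone {g \<in> Cfun. \<exists>\<alpha>::real. \<forall>y. g y \<le> \<alpha> * \<nu> y \<gamma>}"
    (is "Cfun_cone ?A")
  unfolding Cfun_cone_def
proof (intro conjI ballI allI impI)
  fix u v assume "u \<in> ?A" "v \<in> ?A"
  then obtain a1 a2 where "u \<in> Cfun" "\<forall>y. u y \<le> a1 * \<nu> y \<gamma>" "v \<in> Cfun" "\<forall>y. v y \<le> a2 * \<nu> y \<gamma>"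
    by blast
  then show "(\<lambda>x. u x + v x) \<in> ?A"
    by (auto intro!: exI[of _ "a1 + a2"] Cfun_add simp: distrib_right add_mono)
next
  fix u and t :: real assume "u \<in> ?A" "t > 0"
  then obtain a where "u \<in> Cfun" "\<forall>y. u y \<le> a * \<nu> y \<gamma>" by blast
  with \<open>t > 0\<close> show "(\<lambda>x. t * u x) \<in> ?A"
    by (auto intro!: exI[of _ "t * a"] Cfun_scale simp: mult.assoc mult_left_mono)
next
  fix f :: "'a \<Rightarrow> real" assume "f \<in> Cfun" "\<forall>x. f x \<le> 0"
  then show "f \<in> ?A" by (auto intro!: exI[of _ 0])
qed auto

lemma polar_score_differences_iff:
  fixes s :: "'a::metric_space \<Rightarrow> 'v \<Rightarrow> real"
  assumes cpt: "compact (UNIV :: 'a set)" and elic: "elicits s V \<Gamma>"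
    and \<gamma>: "\<gamma> \<in> V" and P: "P \<in> Prob"
  shows "(\<forall>k\<in>{g \<in> Cfun. \<exists>\<beta>\<ge>0. \<exists>c\<in>V. \<forall>y. g y \<le> \<beta> * (s y \<gamma> - s y c)}. expect P k \<le> 0)
         \<longleftrightarrow> \<gamma> \<in> \<Gamma> P"
proof -
  have sC: "(\<lambda>y. s y c) \<in> Cfun" if "c \<in> V" for c
    using elic that by (simp add: elicits_def)
  have "\<gamma> \<in> \<Gamma> P \<longleftrightarrow> (\<forall>c\<in>V. expect P (\<lambda>y. s y \<gamma>) \<le> expect P (\<lambda>y. s y c))"
    using elic \<gamma> P by (simp add: elicits_def)
  also have "\<dots> \<longleftrightarrow> (\<forall>c\<in>V. expect P (\<lambda>y. s y \<gamma> - s y c) \<le> 0)"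
    using expect_diff[OF cpt P sC[OF \<gamma>] sC] by simp
  also have "\<dots> \<longleftrightarrow> (\<forall>k\<in>{g \<in> Cfun. \<exists>\<beta>\<ge>0. \<exists>c\<in>V. \<forall>y. g y \<le> \<beta> * (s y \<gamma> - s y c)}. expect P k \<le> 0)"
  proof safe
    fix k \<beta> c assume E: "\<forall>c\<in>V. expect P (\<lambda>y. s y \<gamma> - s y c) \<le> 0"
      and k: "k \<in> Cfun" "\<beta> \<ge> 0" "c \<in> V" "\<forall>y. k y \<le> \<beta> * (s y \<gamma> - s y c)"
    have "expect P k \<le> expect P (\<lambda>y. \<beta> * (s y \<gamma> - s y c))"
      using k \<gamma> by (intro expect_mono[OF cpt P] Cfun_scale Cfun_diff sC) auto
    also have "\<dots> \<le> 0"
      using E k(2,3) by (simp add: expect_def mult_nonneg_nonpos)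
    finally show "expect P k \<le> 0" .
  next
    fix c assume polar: "\<forall>k\<in>{g \<in> Cfun. \<exists>\<beta>\<ge>0. \<exists>c\<in>V. \<forall>y. g y \<le> \<beta> * (s y \<gamma> - s y c)}. expect P k \<le> 0"
      and c: "c \<in> V"
    have "(\<lambda>y. s y \<gamma> - s y c) \<in> {g \<in> Cfun. \<exists>\<beta>\<ge>0. \<exists>c\<in>V. \<forall>y. g y \<le> \<beta> * (s y \<gamma> - s y c)}"
      using \<gamma> c by (auto intro!: Cfun_diff sC exI[of _ 1] bexI[of _ c])
    then show "expect P (\<lambda>y. s y \<gamma> - s y c) \<le> 0" by (rule bspec[OF polar])
  qed
  finally show ?thesis ..
qed

lemma polar_identification_multiples_iff:
  fixes \<nu> :: "'a::metric_space \<Rightarrow> 'v \<Rightarrow> real"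
  assumes cpt: "compact (UNIV :: 'a set)" and ident: "identifies \<nu> V \<Gamma>"
    and \<gamma>: "\<gamma> \<in> V" and P: "P \<in> Prob"
  shows "(\<forall>k\<in>{g \<in> Cfun. \<exists>\<alpha>::real. \<forall>y. g y \<le> \<alpha> * \<nu> y \<gamma>}. expect P k \<le> 0) \<longleftrightarrow> \<gamma> \<in> \<Gamma> P"
proof -
  have \<nu>C: "(\<lambda>y. \<nu> y \<gamma>) \<in> Cfun" using ident \<gamma> by (simp add: identifies_def)
  have "\<gamma> \<in> \<Gamma> P \<longleftrightarrow> expect P (\<lambda>y. \<nu> y \<gamma>) = 0"
    using ident \<gamma> P by (simp add: identifies_def)
  also have "\<dots> \<longleftrightarrow> (\<forall>k\<in>{g \<in> Cfun. \<exists>\<alpha>::real. \<forall>y. g y \<le> \<alpha> * \<nu> y \<gamma>}. expect P k \<le> 0)"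
  proof safe
    fix k \<alpha> assume "expect P (\<lambda>y. \<nu> y \<gamma>) = 0" "k \<in> Cfun" "\<forall>y. k y \<le> \<alpha> * \<nu> y \<gamma>"
    then show "expect P k \<le> 0"
      using expect_mono[OF cpt P \<open>k \<in> Cfun\<close> Cfun_scale[OF \<nu>C, of \<alpha>]] by (simp add: expect_def)
  next
    assume polar: "\<forall>k\<in>{g \<in> Cfun. \<exists>\<alpha>::real. \<forall>y. g y \<le> \<alpha> * \<nu> y \<gamma>}. expect P k \<le> 0"
    have "(\<lambda>y. \<alpha> * \<nu> y \<gamma>) \<in> {g \<in> Cfun. \<exists>\<alpha>::real. \<forall>y. g y \<le> \<alpha> * \<nu> y \<gamma>}" for \<alpha>
      using Cfun_scale[OF \<nu>C] by blast
    then have "expect P (\<lambda>y. \<alpha> * \<nu> y \<gamma>) \<le> 0" for \<alpha>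
      by (rule bspec[OF polar])
    then have "\<alpha> * expect P (\<lambda>y. \<nu> y \<gamma>) \<le> 0" for \<alpha>
      by (simp add: expect_def)
    from this[of 1] this[of "-1"] show "expect P (\<lambda>y. \<nu> y \<gamma>) = 0" by simp
  qed
  finally show ?thesis ..
qed

theorem mainTheorem10:
  fixes \<Gamma> :: "'y::metric_space measure \<Rightarrow> 'v set"
    and V :: "'v set"
    and s \<nu> :: "'y \<Rightarrow> 'v \<Rightarrow> real"
    and \<gamma> :: 'v
  assumes "compact (UNIV :: 'y set)"
    and "\<forall>\<phi>\<in>Prob. \<Gamma> \<phi> \<subseteq> V"
    and "identifies \<nu> V \<Gamma>"
    and "elicits s V \<Gamma>"
    and "convex_fset (spr s V)"
    and "\<gamma> \<in> V"
    and "level_set \<Gamma> \<gamma> \<noteq> {}"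
  shows "H_s s V \<gamma> = H_nu \<nu> \<gamma>"
proof -
  note cpt = assms(1) and ident = assms(3) and elic = assms(4) and \<gamma> = assms(6)
  define A where "A = {g \<in> Cfun. \<exists>\<beta>\<ge>0. \<exists>c\<in>V. \<forall>y. g y \<le> \<beta> * (s y \<gamma> - s y c)}"
  define B where "B = {g \<in> Cfun. \<exists>\<alpha>::real. \<forall>y. g y \<le> \<alpha> * \<nu> y \<gamma>}"
  have "Cfun_cone A"
    unfolding A_def using elic assms(5) \<gamma> by (intro Cfun_cone_score_differences) (auto simp: elicits_def)
  have "Cfun_cone B"
    unfolding B_def using ident \<gamma> by (intro Cfun_cone_identification_multiples) (simp add: identifies_def)
  have polar_A: "(\<forall>k\<in>A. expect P k \<le> 0) \<longleftrightarrow> \<gamma> \<in> \<Gamma> P" if "P \<in> Prob" for P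
    unfolding A_def using polar_score_differences_iff[OF cpt elic \<gamma> that] .
  have polar_B: "(\<forall>k\<in>B. expect P k \<le> 0) \<longleftrightarrow> \<gamma> \<in> \<Gamma> P" if "P \<in> Prob" for P
    unfolding B_def using polar_identification_multiples_iff[OF cpt ident \<gamma> that] .
  have "H_s s V \<gamma> = weak_top closure_of A" by (simp add: H_s_def A_def)
  also have "\<dots> = {g \<in> Cfun. \<forall>P\<in>Prob. (\<forall>k\<in>A. expect P k \<le> 0) \<longrightarrow> expect P g \<le> 0}"
    by (rule closure_of_Cfun_cone[OF cpt \<open>Cfun_cone A\<close>])
  also have "\<dots> = {g \<in> Cfun. \<forall>P\<in>Prob. (\<forall>k\<in>B. expect P k \<le> 0) \<longrightarrow> expect P g \<le> 0}"
    using polar_A polar_B by simp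
  also have "\<dots> = weak_top closure_of B"
    by (rule closure_of_Cfun_cone[OF cpt \<open>Cfun_cone B\<close>, symmetric])
  also have "\<dots> = H_nu \<nu> \<gamma>" by (simp add: H_nu_def B_def)
  finally show ?thesis .
qed

end
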